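(* Let $\tilde V\in C^2(\mathbb{R},\mathbb{R})$ satisfy: $\tilde V\ge 0$, $\tilde V(-1)=\tilde V(1)=0$, $\tilde V(x)>0$ for $x\in(-1,1)$, $\tilde V''(-1)>0$, $\tilde V''(1)>0$, $\tilde V(x)>0$ and $\tilde V'(x)x>0$ for all $|x|>1$, and $\tilde V(x)\to+\infty$ as $|x|\to+\infty$. Let $a:\mathbb{R}\to\mathbb{R}$ be bounded and continuous with $\liminf_{|t|\to\infty}a(t)=a_\infty>\inf_{t\in\mathbb{R}}a(t)=a(0)>0$, and let $\epsilon>0$. Let $W=\{x\in H^1_{loc}(\mathbb{R}): x+1\in H^1((-\infty,0]),\ x-1\in H^1([0,+\infty))\}$, $J_\epsilon(x)=\int_{-\infty}^{+\infty}\left(\frac12|\dot x|^2+a(\epsilon t)\tilde V(x(t))\right)dt$ and $\mathcal{B}_\epsilon=\inf_{x\in W}J_\epsilon(x)$. Then there exists a $(PS)_{\mathcal{B}_\epsilon}$ sequence for $J_\epsilon$.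
   Context: For $x\in W$ and $v\in H^1(\mathbb{R})$, $J_\epsilon'(x)v=\int_{-\infty}^{+\infty}\left(\dot x\dot v+a(\epsilon t)\tilde V'(x(t))v(t)\right)dt$, and $\|J_\epsilon'(x)\|_*=\sup\{J_\epsilon'(x)v: v\in H^1(\mathbb{R}),\ \|v\|_{H^1(\mathbb{R})}=1\}$. A sequence $(x_n)\subset W$ is a $(PS)_c$ sequence for $J_\epsilon$ if $J_\epsilon(x_n)\to c$ and $\|J_\epsilon'(x_n)\|_*\to0$ as $n\to\infty$. *)

theory Defs
  imports "HOL-Analysis.Analysis"
begin

definition is_wderiv :: "(real \<Rightarrow> real) \<Rightarrow> (real \<Rightarrow> real) \<Rightarrow> bool" where
  "is_wderiv x g \<longleftrightarrow>
     (\<forall>a b. set_integrable lborel {a..b} g \<and> set_integrable lborel {a..b} (\<lambda>t. (g t)^2)) \<and>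
     (\<forall>s t. x t - x s = (LBINT u=s..t. g u))"

definition H1loc :: "(real \<Rightarrow> real) set" where
  "H1loc = {x. \<exists>g. is_wderiv x g}"

text \<open>The (a.e. unique) weak derivative \<open>x\<close> dot.\<close>
definition wderiv :: "(real \<Rightarrow> real) \<Rightarrow> real \<Rightarrow> real" where
  "wderiv x = (SOME g. is_wderiv x g)"

definition H1 :: "(real \<Rightarrow> real) set" where
  "H1 = {v. v \<in> H1loc \<and> integrable lborel (\<lambda>t. (v t)^2)
            \<and> integrable lborel (\<lambda>t. (wderiv v t)^2)}"

definition H1_norm :: "(real \<Rightarrow> real) \<Rightarrow> real" where
  "H1_norm v = sqrt (LINT t|lborel. (v t)^2 + (wderiv v t)^2)"

definition W_set :: "(real \<Rightarrow> real) set" where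
  "W_set = {x. x \<in> H1loc
      \<and> set_integrable lborel {..0} (\<lambda>t. (x t + 1)^2)
      \<and> set_integrable lborel {..0} (\<lambda>t. (wderiv x t)^2)
      \<and> set_integrable lborel {0..} (\<lambda>t. (x t - 1)^2)
      \<and> set_integrable lborel {0..} (\<lambda>t. (wderiv x t)^2)}"

definition J_eps :: "(real \<Rightarrow> real) \<Rightarrow> (real \<Rightarrow> real) \<Rightarrow> real \<Rightarrow> (real \<Rightarrow> real) \<Rightarrow> real" where
  "J_eps V a \<epsilon> x = (LINT t|lborel. (1/2) * (wderiv x t)^2 + a (\<epsilon> * t) * V (x t))"

definition dJ_eps :: "(real \<Rightarrow> real) \<Rightarrow> (real \<Rightarrow> real) \<Rightarrow> real \<Rightarrow> (real \<Rightarrow> real) \<Rightarrow> (real \<Rightarrow> real) \<Rightarrow> real" where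
  "dJ_eps V a \<epsilon> x v = (LINT t|lborel. wderiv x t * wderiv v t + a (\<epsilon> * t) * deriv V (x t) * v t)"

definition dJ_norm :: "(real \<Rightarrow> real) \<Rightarrow> (real \<Rightarrow> real) \<Rightarrow> real \<Rightarrow> (real \<Rightarrow> real) \<Rightarrow> real" where
  "dJ_norm V a \<epsilon> x = Sup {dJ_eps V a \<epsilon> x v | v. v \<in> H1 \<and> H1_norm v = 1}"

definition B_eps :: "(real \<Rightarrow> real) \<Rightarrow> (real \<Rightarrow> real) \<Rightarrow> real \<Rightarrow> real" where
  "B_eps V a \<epsilon> = Inf (J_eps V a \<epsilon> ` W_set)"

definition PS_seq :: "(real \<Rightarrow> real) \<Rightarrow> (real \<Rightarrow> real) \<Rightarrow> real \<Rightarrow> real \<Rightarrow> (nat \<Rightarrow> real \<Rightarrow> real) \<Rightarrow> bool" where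
  "PS_seq V a \<epsilon> c xs \<longleftrightarrow> (\<forall>n. xs n \<in> W_set) \<and>
     (\<lambda>n. J_eps V a \<epsilon> (xs n)) \<longlonglongrightarrow> c \<and> (\<lambda>n. dJ_norm V a \<epsilon> (xs n)) \<longlonglongrightarrow> 0"

end

theory Submission
  imports Defs
begin

text \<open>The level \<open>B\<^sub>\<epsilon>\<close> is approached by near-minimisers, and we show that near-minimisers
  already have small derivative, so no deformation lemma is needed. On a sublevel set of
  \<open>J\<^sub>\<epsilon>\<close> all paths are uniformly bounded (the kinetic energy controls oscillations, and the
  coercive potential then forbids large values), while unit vectors of \<open>H\<^sup>1\<close> are bounded by 4.
  Hence along \<open>x - \<tau> v\<close> the \<open>C\<^sup>2\<close> potential admits a uniform quadratic Taylor bound, giving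
  \<open>J(x - \<tau> v) \<le> J(x) - \<tau> J'(x) v + M \<tau>\<^sup>2\<close>. If \<open>x\<close> is close enough to the infimum and
  \<open>J'(x) v\<close> were large for some unit \<open>v\<close>, a small step would go below \<open>B\<^sub>\<epsilon>\<close>.\<close>

section \<open>Weak derivatives\<close>

lemma set_integrable_of_integrable:
  "S \<in> sets borel \<Longrightarrow> integrable lborel f \<Longrightarrow> set_integrable lborel S (f :: real \<Rightarrow> real)"
  unfolding set_integrable_def by (intro integrable_mult_indicator) auto

lemma emeasure_density_eq_set_integral:
  fixes h :: "real \<Rightarrow> real"
  assumes h: "integrable lborel h" "\<And>t. 0 \<le> h t" and [measurable]: "A \<in> sets borel"
  shows "emeasure (density lborel (\<lambda>t. ennreal (h t))) A = ennreal (LINT t:A|lborel. h t)"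
proof -
  have [measurable]: "h \<in> borel_measurable borel" using h by auto
  have "emeasure (density lborel (\<lambda>t. ennreal (h t))) A = (\<integral>\<^sup>+ t. ennreal (indicator A t * h t) \<partial>lborel)"
    by (subst emeasure_density) (auto intro!: nn_integral_cong simp: indicator_def)
  also have "\<dots> = ennreal (LINT t:A|lborel. h t)"
    unfolding set_lebesgue_integral_def
    using integrable_real_mult_indicator[OF _ h(1), of A] h(2)
    by (subst nn_integral_eq_integral) (auto simp: mult.commute)
  finally show ?thesis .
qed

lemma AE_zero_if_set_integral_greaterThan_zero:
  fixes f :: "real \<Rightarrow> real"
  assumes f: "integrable lborel f" and zero: "\<And>c. (LINT t:{c<..}|lborel. f t) = 0"
  shows "AE t in lborel. f t = 0"
proof -
  define P where "P = (\<lambda>t. ennreal (max 0 (f t)))"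
  define N where "N = (\<lambda>t. ennreal (max 0 (- f t)))"
  have [measurable]: "f \<in> borel_measurable borel" using f by auto
  have emeasure_P: "emeasure (density lborel P) A = ennreal (LINT t:A|lborel. max 0 (f t))"
    and emeasure_N: "emeasure (density lborel N) A = ennreal (LINT t:A|lborel. max 0 (- f t))"
    if "A \<in> sets borel" for A
    unfolding P_def N_def using that f by (auto intro!: emeasure_density_eq_set_integral)
  have "density lborel P = density lborel N"
  proof (rule measure_eqI_lessThan)
    show "emeasure (density lborel P) {c<..} < \<infinity>" for c
      by (simp add: emeasure_P)
    show "emeasure (density lborel P) {c<..} = emeasure (density lborel N) {c<..}" for c
    proof -
      have "set_integrable lborel {c<..} (\<lambda>t. max 0 (f t))" "set_integrable lborel {c<..} (\<lambda>t. max 0 (- f t))"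
        using f by (auto intro: set_integrable_of_integrable)
      then have "(LINT t:{c<..}|lborel. f t) = (LINT t:{c<..}|lborel. max 0 (f t)) - (LINT t:{c<..}|lborel. max 0 (- f t))"
      proof -
        have "(LINT t:{c<..}|lborel. f t) = (LINT t:{c<..}|lborel. max 0 (f t) - max 0 (- f t))"
          by (rule set_lebesgue_integral_cong) (auto simp: max_def)
        also have "\<dots> = (LINT t:{c<..}|lborel. max 0 (f t)) - (LINT t:{c<..}|lborel. max 0 (- f t))"
          by (rule set_integral_diff(2)) fact+
        finally show ?thesis .
      qed
      then show ?thesis using zero[of c] by (simp add: emeasure_P emeasure_N)
    qed
  qed simp_all
  then have "AE t in lborel. P t = N t"
    by (subst sigma_finite_measure.density_unique_iff[OF sigma_finite_lborel, symmetric])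
       (auto simp: P_def N_def)
  then show ?thesis
    by eventually_elim (auto simp: P_def N_def max_def split: if_splits)
qed

lemma is_wderiv_set_integrable_box:
  assumes "is_wderiv x g"
  shows "set_integrable lborel {c<..<d} g"
proof -
  have "set_integrable lborel {c..d} g" using assms unfolding is_wderiv_def by blast
  then show ?thesis by (rule set_integrable_subset) auto
qed

lemma is_wderiv_set_integral_box:
  assumes "is_wderiv x g" "c \<le> d"
  shows "(LINT t:{c<..<d}|lborel. g t) = x d - x c"
  using assms unfolding is_wderiv_def by (simp add: interval_lebesgue_integral_def)

lemma is_wderiv_AE_unique:
  assumes g: "is_wderiv x g" and k: "is_wderiv x k"
  shows "AE t in lborel. g t = k t"
proof -
  have "AE t in lborel. indicator {- real n<..<real n} t * (g t - k t) = 0" for n :: nat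
  proof (rule AE_zero_if_set_integral_greaterThan_zero)
    have "set_integrable lborel {- real n<..<real n} (\<lambda>t. g t - k t)"
      using is_wderiv_set_integrable_box[OF g] is_wderiv_set_integrable_box[OF k] by (rule set_integral_diff)
    then show "integrable lborel (\<lambda>t. indicator {- real n<..<real n} t * (g t - k t))"
      unfolding set_integrable_def by simp
  next
    fix c :: real
    define c' where "c' = max c (- real n)"
    have "(LINT t:{c<..}|lborel. indicator {- real n<..<real n} t * (g t - k t))
        = (LINT t:{c'<..<real n}|lborel. g t - k t)"
      unfolding set_lebesgue_integral_def c'_def
      by (intro Bochner_Integration.integral_cong) (auto simp: indicator_def)
    also have "\<dots> = 0"
    proof (cases "c' \<le> real n")
      case True
      then show ?thesis
        using is_wderiv_set_integral_box[OF g True] is_wderiv_set_integral_box[OF k True]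
          is_wderiv_set_integrable_box[OF g] is_wderiv_set_integrable_box[OF k]
        by (simp add: set_integral_diff(2))
    qed (simp add: set_lebesgue_integral_def)
    finally show "(LINT t:{c<..}|lborel. indicator {- real n<..<real n} t * (g t - k t)) = 0" .
  qed
  then have "AE t in lborel. \<forall>n::nat. indicator {- real n<..<real n} t * (g t - k t) = 0"
    by (subst AE_all_countable) (simp del: mult_eq_0_iff)
  then show ?thesis
  proof eventually_elim
    case (elim t)
    obtain n :: nat where "\<bar>t\<bar> < real n" using reals_Archimedean2 by blast
    then have "indicator {- real n<..<real n} t = (1::real)" by (auto simp: indicator_def)
    with elim[rule_format, of n] show ?case by simp
  qed
qed

lemma is_wderiv_borel_measurable_deriv:
  assumes "is_wderiv x g"
  shows "g \<in> borel_measurable borel"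
proof (rule borel_measurable_LIMSEQ_real[where u="\<lambda>n t. indicator {- real n..real n} t * g t"])
  fix n :: nat
  have "set_integrable lborel {- real n..real n} g" using assms unfolding is_wderiv_def by blast
  then show "(\<lambda>t. indicator {- real n..real n} t * g t) \<in> borel_measurable borel"
    unfolding set_integrable_def by auto
next
  fix t :: real
  obtain N :: nat where "\<bar>t\<bar> < real N" using reals_Archimedean2 by blast
  then have "\<forall>n\<ge>N. indicator {- real n..real n} t * g t = g t"
    by (auto simp: indicator_def)
  then show "(\<lambda>n. indicator {- real n..real n} t * g t) \<longlonglongrightarrow> g t"
    by (intro tendsto_eventually) (auto simp: eventually_sequentially)
qed

lemma is_wderiv_continuous:
  assumes g: "is_wderiv x g"
  shows "continuous_on UNIV x"
proof (rule continuous_at_imp_continuous_on, intro ballI)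
  fix t :: real
  define a where "a = t - 1"
  define b where "b = t + 1"
  have "set_integrable lborel {a..b} g" using g unfolding is_wderiv_def by blast
  then have gi: "g integrable_on {a..b}" by (rule set_borel_integral_eq_integral(1))
  have eq: "x s = x a + integral {a..s} g" if "s \<in> {a..b}" for s
  proof -
    have "set_integrable lborel {a..s} g" using g unfolding is_wderiv_def by blast
    then have "(LBINT u=a..s. g u) = integral {a..s} g"
      using that by (intro interval_integral_eq_integral) auto
    moreover have "x s - x a = (LBINT u=a..s. g u)" using g unfolding is_wderiv_def by blast
    ultimately show ?thesis by simp
  qed
  have "continuous_on {a..b} (\<lambda>s. x a + integral {a..s} g)"
    by (intro continuous_intros indefinite_integral_continuous_1 gi)
  then have "continuous_on {a..b} x"
    using eq by (metis (no_types, lifting) continuous_on_cong)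
  moreover have "t \<in> interior {a..b}" unfolding a_def b_def by auto
  ultimately show "isCont x t"
    by (rule continuous_on_interior)
qed

lemma is_wderiv_borel_measurable:
  "is_wderiv x g \<Longrightarrow> x \<in> borel_measurable borel"
  by (rule borel_measurable_continuous_onI[OF is_wderiv_continuous])

lemma is_wderiv_interval_integrable:
  assumes "is_wderiv x g"
  shows "interval_lebesgue_integrable lborel (ereal s) (ereal t) g"
proof -
  have "set_integrable lborel {min s t..max s t} g" using assms unfolding is_wderiv_def by blast
  then have "set_integrable lborel {min s t<..<max s t} g"
    by (rule set_integrable_subset) auto
  then show ?thesis unfolding interval_lebesgue_integrable_def
    by (cases "s \<le> t") (auto simp: min_def max_def)
qed

lemma set_integrable_square_diff_scaled:
  fixes f g :: "real \<Rightarrow> real"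
  assumes [measurable]: "f \<in> borel_measurable borel" "g \<in> borel_measurable borel" "S \<in> sets borel"
    and fi: "set_integrable lborel S (\<lambda>t. (f t)^2)" and gi: "set_integrable lborel S (\<lambda>t. (g t)^2)"
  shows "set_integrable lborel S (\<lambda>t. (f t - c * g t)^2)"
  unfolding set_integrable_def
proof (rule Bochner_Integration.integrable_bound)
  show "integrable lborel (\<lambda>t. 2 * (indicator S t * (f t)^2) + (2 * c^2) * (indicator S t * (g t)^2))"
    using fi gi unfolding set_integrable_def by simp
  have "(f t - c * g t)^2 \<le> 2 * (f t)^2 + 2 * c^2 * (g t)^2" for t
    using zero_le_power2[of "f t + c * g t"] by (simp add: power2_eq_square algebra_simps)
  then show "AE t in lborel. norm (indicator S t *\<^sub>R (f t - c * g t)^2)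
       \<le> norm (2 * (indicator S t * (f t)^2) + (2 * c^2) * (indicator S t * (g t)^2))"
    by (intro AE_I2) (simp add: indicator_def)
qed measurable

lemma is_wderiv_diff_scaled:
  assumes g: "is_wderiv x g" and h: "is_wderiv v h"
  shows "is_wderiv (\<lambda>t. x t - c * v t) (\<lambda>t. g t - c * h t)"
  unfolding is_wderiv_def
proof (intro conjI allI)
  fix p q :: real
  have "set_integrable lborel {p..q} g" "set_integrable lborel {p..q} h"
    using g h unfolding is_wderiv_def by blast+
  then show "set_integrable lborel {p..q} (\<lambda>t. g t - c * h t)"
    by (intro set_integral_diff set_integrable_mult_right)
  show "set_integrable lborel {p..q} (\<lambda>t. (g t - c * h t)^2)"
    using g h by (intro set_integrable_square_diff_scaled is_wderiv_borel_measurable_deriv)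
      (auto simp: is_wderiv_def)
next
  fix s t :: real
  have "(LBINT u=s..t. g u - c * h u) = (LBINT u=s..t. g u) - c * (LBINT u=s..t. h u)"
    using is_wderiv_interval_integrable[OF g] is_wderiv_interval_integrable[OF h]
    by (subst interval_lebesgue_integral_diff) auto
  moreover have "x t - x s = (LBINT u=s..t. g u)" "v t - v s = (LBINT u=s..t. h u)"
    using g h unfolding is_wderiv_def by blast+
  ultimately show "x t - c * v t - (x s - c * v s) = (LBINT u=s..t. g u - c * h u)"
    by (simp add: algebra_simps)
qed

lemma is_wderiv_scaled:
  assumes "is_wderiv v h"
  shows "is_wderiv (\<lambda>t. c * v t) (\<lambda>t. c * h t)"
proof -
  have "is_wderiv (\<lambda>t. 0) (\<lambda>t. 0)" unfolding is_wderiv_def by (simp add: set_integrable_def)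
  from is_wderiv_diff_scaled[OF this assms, of "-c"] show ?thesis by simp
qed

lemma is_wderiv_add_const:
  "is_wderiv x g \<Longrightarrow> is_wderiv (\<lambda>t. x t + k) g"
  unfolding is_wderiv_def by simp

lemma is_wderiv_primitive:
  fixes h :: "real \<Rightarrow> real"
  assumes h: "\<And>p q. set_integrable lborel {p..q} h" "\<And>p q. set_integrable lborel {p..q} (\<lambda>t. (h t)^2)"
  shows "is_wderiv (\<lambda>t. LBINT u=0..t. h u) h"
  unfolding is_wderiv_def
proof (intro conjI allI)
  fix p q show "set_integrable lborel {p..q} h" "set_integrable lborel {p..q} (\<lambda>t. (h t)^2)"
    using h by auto
next
  fix s t :: real
  have "interval_lebesgue_integrable lborel (ereal p) (ereal q) h" for p q
  proof -
    have "set_integrable lborel {min p q<..<max p q} h"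
      by (rule set_integrable_subset[OF h(1)[of "min p q" "max p q"]]) auto
    then show ?thesis
      unfolding interval_lebesgue_integrable_def by (cases "p \<le> q") (auto simp: min_def max_def)
  qed
  then have "(LBINT u=ereal 0..ereal s. h u) + (LBINT u=ereal s..ereal t. h u) = (LBINT u=ereal 0..ereal t. h u)"
    by (intro interval_integral_sum) (simp_all add: min_def max_def)
  then show "(LBINT u=0..t. h u) - (LBINT u=0..s. h u) = (LBINT u=s..t. h u)"
    by (simp add: zero_ereal_def algebra_simps)
qed

lemma wderiv_is_wderiv: "x \<in> H1loc \<Longrightarrow> is_wderiv x (wderiv x)"
  unfolding H1loc_def wderiv_def by (metis (mono_tags) mem_Collect_eq someI)

lemma is_wderiv_imp_H1loc: "is_wderiv x g \<Longrightarrow> x \<in> H1loc"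
  unfolding H1loc_def by blast

lemma is_wderiv_AE_wderiv: "is_wderiv x g \<Longrightarrow> AE t in lborel. wderiv x t = g t"
  by (rule is_wderiv_AE_unique[OF wderiv_is_wderiv[OF is_wderiv_imp_H1loc]])

lemma is_wderiv_set_integrable_wderiv_square:
  assumes "is_wderiv x g" and [measurable]: "S \<in> sets borel"
    and "set_integrable lborel S (\<lambda>t. (g t)^2)"
  shows "set_integrable lborel S (\<lambda>t. (wderiv x t)^2)"
proof -
  have [measurable]: "g \<in> borel_measurable borel" "wderiv x \<in> borel_measurable borel"
    using assms(1) by (auto intro: is_wderiv_borel_measurable_deriv wderiv_is_wderiv is_wderiv_imp_H1loc)
  have "AE t in lborel. indicator S t * (g t)^2 = indicator S t * (wderiv x t)^2"
    using is_wderiv_AE_wderiv[OF assms(1)] by eventually_elim simp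
  with assms(3) show ?thesis
    unfolding set_integrable_def by (subst integrable_cong_AE[symmetric]) auto
qed

section \<open>Pointwise bounds by the energy\<close>

lemma set_integral_mono_subset_nonneg:
  fixes f :: "real \<Rightarrow> real"
  assumes "A \<subseteq> B" "A \<in> sets borel" "set_integrable lborel B f" "\<And>t. t \<in> B \<Longrightarrow> 0 \<le> f t"
  shows "set_integrable lborel A f" "(LINT t:A|lborel. f t) \<le> (LINT t:B|lborel. f t)"
proof -
  show A: "set_integrable lborel A f"
    by (rule set_integrable_subset[OF assms(3)]) (simp_all only: sets_lborel assms(1,2))
  have "indicator A t * f t \<le> indicator B t * f t" for t
    using assms(1) assms(4)[of t] by (auto simp: indicator_def)
  with A assms(3) show "(LINT t:A|lborel. f t) \<le> (LINT t:B|lborel. f t)"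
    unfolding set_lebesgue_integral_def set_integrable_def by (simp add: integral_mono)
qed

lemma set_integral_box_le_integral_nonneg:
  fixes f :: "real \<Rightarrow> real"
  assumes "integrable lborel f" "\<And>t. 0 \<le> f t"
  shows "set_integrable lborel {p<..<q} f" "(LINT t:{p<..<q}|lborel. f t) \<le> (LINT t|lborel. f t)"
proof -
  have UNIV: "set_integrable lborel UNIV f" using assms(1) unfolding set_integrable_def by simp
  show "set_integrable lborel {p<..<q} f"
    by (rule set_integral_mono_subset_nonneg(1)[OF _ _ UNIV]) (use assms in auto)
  have "(LINT t:{p<..<q}|lborel. f t) \<le> (LINT t:UNIV|lborel. f t)"
    by (rule set_integral_mono_subset_nonneg(2)[OF _ _ UNIV]) (use assms in auto)
  then show "(LINT t:{p<..<q}|lborel. f t) \<le> (LINT t|lborel. f t)"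
    unfolding set_lebesgue_integral_def by simp
qed

lemma is_wderiv_oscillation_bound:
  assumes g: "is_wderiv u g" and rs: "r \<le> s"
  shows "\<bar>u s - u r\<bar> \<le> ((LINT t:{r<..<s}|lborel. (g t)^2) + (s - r)) / 2"
proof -
  have sg: "set_integrable lborel {r<..<s} g" by (rule is_wderiv_set_integrable_box[OF g])
  have sg2: "set_integrable lborel {r<..<s} (\<lambda>t. (g t)^2)"
  proof -
    have "set_integrable lborel {r..s} (\<lambda>t. (g t)^2)" using g unfolding is_wderiv_def by blast
    then show ?thesis by (rule set_integrable_subset) auto
  qed
  have s1: "set_integrable lborel {r<..<s} (\<lambda>t. 1::real)"
    unfolding set_integrable_def using rs by (simp add: integrable_real_indicator)
  have "\<bar>u s - u r\<bar> = \<bar>LINT t:{r<..<s}|lborel. g t\<bar>" using is_wderiv_set_integral_box[OF g rs] by simp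
  also have "\<dots> \<le> (LINT t:{r<..<s}|lborel. \<bar>g t\<bar>)"
    unfolding set_lebesgue_integral_def
    by (rule order_trans[OF integral_abs_bound]) (simp add: abs_mult)
  also have "\<dots> \<le> (LINT t:{r<..<s}|lborel. ((g t)^2 + 1) / 2)"
  proof (rule set_integral_mono[OF set_integrable_abs[OF sg]])
    show "set_integrable lborel {r<..<s} (\<lambda>t. ((g t)^2 + 1) / 2)"
      using sg2 s1 by (intro set_integrable_divide set_integral_add)
    show "\<bar>g t\<bar> \<le> ((g t)^2 + 1) / 2" for t
      using zero_le_power2[of "\<bar>g t\<bar> - 1"] by (simp add: power2_eq_square algebra_simps abs_mult_self)
  qed
  also have "\<dots> = ((LINT t:{r<..<s}|lborel. (g t)^2) + (LINT t:{r<..<s}|lborel. 1)) / 2"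
    using sg2 s1 by (simp add: set_integral_add set_integral_divide_zero)
  also have "(LINT t:{r<..<s}|lborel. (1::real)) = s - r"
    using rs by (simp add: set_lebesgue_integral_def)
  finally show ?thesis .
qed

lemma exists_abs_le_if_set_integral_square_less:
  fixes u :: "real \<Rightarrow> real"
  assumes si: "set_integrable lborel {c<..<d} (\<lambda>t. (u t)^2)" and cd: "c < d" and M: "0 \<le> M"
    and less: "(LINT t:{c<..<d}|lborel. (u t)^2) < (d - c) * M^2"
  shows "\<exists>r. c < r \<and> r < d \<and> \<bar>u r\<bar> \<le> M"
proof (rule ccontr)
  assume "\<not> ?thesis"
  then have big: "\<And>r. r \<in> {c<..<d} \<Longrightarrow> M^2 \<le> (u r)^2"
    using M by (auto simp: abs_le_square_iff[symmetric] not_le intro: less_imp_le)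
  have "set_integrable lborel {c<..<d} (\<lambda>t. M^2)"
    unfolding set_integrable_def using cd by (simp add: integrable_real_indicator)
  then have "(LINT t:{c<..<d}|lborel. M^2) \<le> (LINT t:{c<..<d}|lborel. (u t)^2)"
    by (rule set_integral_mono[OF _ si big])
  moreover have "(LINT t:{c<..<d}|lborel. M^2) = (d - c) * M^2"
    using cd by (simp add: set_lebesgue_integral_def)
  ultimately show False using less by simp
qed

text \<open>Some point of the window is controlled by the \<open>L\<^sup>2\<close> norm of \<open>u\<close>, every other point by the
  oscillation bound.\<close>

lemma is_wderiv_abs_le_window:
  assumes g: "is_wderiv u g" and cs: "c \<le> s" "s \<le> c + 2"
    and si: "set_integrable lborel {c<..<c+2} (\<lambda>t. (u t)^2)"
    and A: "(LINT t:{c<..<c+2}|lborel. (u t)^2) \<le> A"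
    and B: "(LINT t:{c<..<c+2}|lborel. (g t)^2) \<le> B"
  shows "\<bar>u s\<bar> \<le> A + 2 + B / 2"
proof -
  have "0 \<le> (LINT t:{c<..<c+2}|lborel. (u t)^2)"
    unfolding set_lebesgue_integral_def by (intro Bochner_Integration.integral_nonneg) auto
  with A have A0: "0 \<le> A" by simp
  have sg2: "set_integrable lborel {c<..<c+2} (\<lambda>t. (g t)^2)"
  proof -
    have "set_integrable lborel {c..c+2} (\<lambda>t. (g t)^2)" using g unfolding is_wderiv_def by blast
    then show ?thesis by (rule set_integrable_subset) auto
  qed
  have "(LINT t:{c<..<c+2}|lborel. (u t)^2) < (c + 2 - c) * (A + 1)^2"
    using A A0 by (simp add: power2_eq_square algebra_simps) (smt (verit) mult_nonneg_nonneg)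
  then obtain r where r: "c < r" "r < c + 2" "\<bar>u r\<bar> \<le> A + 1"
    using A0 exists_abs_le_if_set_integral_square_less[OF si, of "A + 1"] by force
  have sub: "(LINT t:{p<..<q}|lborel. (g t)^2) \<le> B" if "c \<le> p" "q \<le> c + 2" for p q
    using set_integral_mono_subset_nonneg(2)[OF _ _ sg2, of "{p<..<q}"] that B by fastforce
  have "\<bar>u s - u r\<bar> \<le> (B + 2) / 2"
  proof (cases "r \<le> s")
    case True
    then show ?thesis
      using is_wderiv_oscillation_bound[OF g True] sub[of r s] r cs by simp
  next
    case False
    then show ?thesis
      using is_wderiv_oscillation_bound[OF g, of s r] sub[of s r] r cs by (simp add: abs_minus_commute)
  qed
  then show ?thesis using r(3) by (simp add: add_divide_distrib)
qed

lemma W_set_wderiv: "x \<in> W_set \<Longrightarrow> is_wderiv x (wderiv x)"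
  unfolding W_set_def by (auto intro: wderiv_is_wderiv)

lemma is_wderiv_abs_le_on_set:
  assumes g: "is_wderiv u g" and S: "S \<in> sets borel" "{c<..<c+2} \<subseteq> S" and s: "c \<le> s" "s \<le> c + 2"
    and u: "set_integrable lborel S (\<lambda>t. (u t)^2)" and gS: "set_integrable lborel S (\<lambda>t. (g t)^2)"
  shows "\<bar>u s\<bar> \<le> (LINT t:S|lborel. (u t)^2) + 2 + (LINT t:S|lborel. (g t)^2) / 2"
  using S u gS
  by (intro is_wderiv_abs_le_window[OF g s] set_integral_mono_subset_nonneg[of "{c<..<c+2}" S]) auto

lemma W_set_bounded:
  assumes xW: "x \<in> W_set"
  shows "\<exists>R. \<forall>t. \<bar>x t\<bar> \<le> R"
proof -
  have g: "is_wderiv x (wderiv x)" by (rule W_set_wderiv[OF xW])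
  have g': "is_wderiv (\<lambda>t. x t - 1) (wderiv x)" "is_wderiv (\<lambda>t. x t + 1) (wderiv x)"
    using is_wderiv_add_const[OF g, of "-1"] is_wderiv_add_const[OF g, of 1] by simp_all
  have i: "set_integrable lborel {0..} (\<lambda>t. (x t - 1)^2)" "set_integrable lborel {0..} (\<lambda>t. (wderiv x t)^2)"
    "set_integrable lborel {..0} (\<lambda>t. (x t + 1)^2)" "set_integrable lborel {..0} (\<lambda>t. (wderiv x t)^2)"
    using xW unfolding W_set_def by blast+
  define A where "A = (LINT t:{0..}|lborel. (x t - 1)^2) + 2 + (LINT t:{0..}|lborel. (wderiv x t)^2) / 2"
  define B where "B = (LINT t:{..0}|lborel. (x t + 1)^2) + 2 + (LINT t:{..0}|lborel. (wderiv x t)^2) / 2"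
  have A: "\<bar>x s - 1\<bar> \<le> A" if "2 \<le> s" for s
    unfolding A_def using that by (intro is_wderiv_abs_le_on_set[OF g'(1) _ _ _ _ i(1,2), of "s - 2"]) auto
  have B: "\<bar>x s + 1\<bar> \<le> B" if "s \<le> -2" for s
    unfolding B_def using that by (intro is_wderiv_abs_le_on_set[OF g'(2) _ _ _ _ i(3,4), of s]) auto
  have "compact (x ` {-2..2})"
    by (intro compact_continuous_image continuous_on_subset[OF is_wderiv_continuous[OF g]]) auto
  then obtain M where M: "\<And>y. y \<in> x ` {-2..2} \<Longrightarrow> norm y \<le> M"
    using compact_imp_bounded bounded_iff by metis
  have "\<bar>x s\<bar> \<le> max M (max (A + 1) (B + 1))" for s
    using A[of s] B[of s] M[of "x s"] by (cases "2 \<le> s"; cases "s \<le> -2") auto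
  then show ?thesis by blast
qed

lemma H1_wderiv: "v \<in> H1 \<Longrightarrow> is_wderiv v (wderiv v)"
  unfolding H1_def by (auto intro: wderiv_is_wderiv)

lemma H1_integrable:
  "v \<in> H1 \<Longrightarrow> integrable lborel (\<lambda>t. (v t)^2)"
  "v \<in> H1 \<Longrightarrow> integrable lborel (\<lambda>t. (wderiv v t)^2)"
  unfolding H1_def by auto

lemma H1_norm_eq_1:
  assumes v: "v \<in> H1" and n: "H1_norm v = 1"
  shows "(LINT t|lborel. (v t)^2) \<le> 1" "(LINT t|lborel. (wderiv v t)^2) \<le> 1"
proof -
  have "sqrt (LINT t|lborel. (v t)^2 + (wderiv v t)^2) = 1" using n unfolding H1_norm_def .
  then have "(LINT t|lborel. (v t)^2) + (LINT t|lborel. (wderiv v t)^2) = 1"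
    using H1_integrable[OF v] by simp
  moreover have "0 \<le> (LINT t|lborel. (v t)^2)" "0 \<le> (LINT t|lborel. (wderiv v t)^2)" by auto
  ultimately show "(LINT t|lborel. (v t)^2) \<le> 1" "(LINT t|lborel. (wderiv v t)^2) \<le> 1" by linarith+
qed

lemma H1_unit_abs_le:
  assumes v: "v \<in> H1" and n: "H1_norm v = 1"
  shows "\<bar>v s\<bar> \<le> 4"
proof -
  have "\<bar>v s\<bar> \<le> 1 + 2 + 1 / 2"
  proof (rule is_wderiv_abs_le_window[OF H1_wderiv[OF v], of "s - 2"])
    show "set_integrable lborel {s - 2<..<s - 2 + 2} (\<lambda>t. (v t)^2)"
      by (rule set_integral_box_le_integral_nonneg(1)[OF H1_integrable(1)[OF v]]) simp
    show "(LINT t:{s - 2<..<s - 2 + 2}|lborel. (v t)^2) \<le> 1"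
      using set_integral_box_le_integral_nonneg(2)[OF H1_integrable(1)[OF v]] H1_norm_eq_1(1)[OF v n]
      by (smt (verit) zero_le_power2)
    show "(LINT t:{s - 2<..<s - 2 + 2}|lborel. (wderiv v t)^2) \<le> 1"
      using set_integral_box_le_integral_nonneg(2)[OF H1_integrable(2)[OF v]] H1_norm_eq_1(2)[OF v n]
      by (smt (verit) zero_le_power2)
  qed auto
  then show ?thesis by simp
qed

section \<open>The admissible class and the test space\<close>

lemma W_set_diff_scaled:
  assumes xW: "x \<in> W_set" and v: "v \<in> H1"
  shows "(\<lambda>t. x t - c * v t) \<in> W_set"
    "AE t in lborel. wderiv (\<lambda>t. x t - c * v t) t = wderiv x t - c * wderiv v t"
proof -
  define y where "y = (\<lambda>t. x t - c * v t)"
  have gx: "is_wderiv x (wderiv x)" by (rule W_set_wderiv[OF xW])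
  have gv: "is_wderiv v (wderiv v)" by (rule H1_wderiv[OF v])
  have gy: "is_wderiv y (\<lambda>t. wderiv x t - c * wderiv v t)"
    unfolding y_def by (rule is_wderiv_diff_scaled[OF gx gv])
  then show "AE t in lborel. wderiv (\<lambda>t. x t - c * v t) t = wderiv x t - c * wderiv v t"
    unfolding y_def by (rule is_wderiv_AE_wderiv)
  have [measurable]: "x \<in> borel_measurable borel" "v \<in> borel_measurable borel"
    "wderiv x \<in> borel_measurable borel" "wderiv v \<in> borel_measurable borel"
    using gx gv by (auto intro: is_wderiv_borel_measurable_deriv is_wderiv_borel_measurable)
  have v2: "set_integrable lborel S (\<lambda>t. (v t)^2)" "set_integrable lborel S (\<lambda>t. (wderiv v t)^2)"
    if "S \<in> sets borel" for S
    using that H1_integrable[OF v] by (auto intro: set_integrable_of_integrable)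
  have "set_integrable lborel S (\<lambda>t. (wderiv y t)^2)"
    if S: "S \<in> sets borel" and "set_integrable lborel S (\<lambda>t. (wderiv x t)^2)" for S
    using that v2[OF S] by (intro is_wderiv_set_integrable_wderiv_square[OF gy S]
        set_integrable_square_diff_scaled) auto
  moreover have "set_integrable lborel {..0} (\<lambda>t. ((x t + 1) - c * v t)^2)"
    "set_integrable lborel {0..} (\<lambda>t. ((x t - 1) - c * v t)^2)"
    using xW v2 by (auto intro!: set_integrable_square_diff_scaled simp: W_set_def)
  ultimately show "(\<lambda>t. x t - c * v t) \<in> W_set"
    using xW is_wderiv_imp_H1loc[OF gy] unfolding W_set_def y_def by (simp add: algebra_simps)
qed

lemma set_integrable_square_if_continuous_vanishing:
  fixes f :: "real \<Rightarrow> real"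
  assumes c: "continuous_on UNIV f" and S: "S \<in> sets borel" and z: "\<And>t. t \<in> S \<Longrightarrow> t \<notin> {p..q} \<Longrightarrow> f t = 0"
  shows "set_integrable lborel S (\<lambda>t. (f t)^2)"
proof -
  have "compact (f ` {p..q})" by (intro compact_continuous_image continuous_on_subset[OF c]) auto
  then obtain M where M: "\<And>y. y \<in> f ` {p..q} \<Longrightarrow> norm y \<le> M" using compact_imp_bounded bounded_iff by metis
  have fm: "f \<in> borel_measurable borel" by (rule borel_measurable_continuous_onI[OF c])
  have "integrable lborel (\<lambda>t. indicator S t * (f t)^2)"
  proof (rule Bochner_Integration.integrable_bound)
    have "integrable lborel (indicat_real {p..q})"
      by (rule integrable_real_indicator) (simp_all add: emeasure_lborel_Icc_eq)
    then show "integrable lborel (\<lambda>t. M^2 * indicat_real {p..q} t)" by simp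
    show "(\<lambda>t. indicator S t * (f t)^2) \<in> borel_measurable lborel" using fm S by measurable
    show "AE t in lborel. norm (indicator S t * (f t)^2) \<le> norm (M^2 * indicat_real {p..q} t)"
    proof (rule AE_I2)
      fix t
      show "norm (indicator S t * (f t)^2) \<le> norm (M^2 * indicat_real {p..q} t)"
      proof (cases "t \<in> {p..q}")
        case True
        then have "\<bar>f t\<bar> \<le> M" using M[of "f t"] by auto
        then have "\<bar>f t\<bar>^2 \<le> M^2" by (intro power_mono) auto
        then have "(f t)^2 \<le> M^2" by simp
        then show ?thesis using True by (auto simp: indicator_def)
      next
        case False then show ?thesis using z[of t] by (cases "t \<in> S") auto
      qed
    qed
  qed
  then show ?thesis unfolding set_integrable_def by simp
qed

lemma set_integrable_indicator_Icc:
  fixes S :: "real set"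
  assumes "S \<in> sets borel"
  shows "set_integrable lborel {p..q} (indicat_real S)" "set_integrable lborel {p..q} (\<lambda>t. (indicat_real S t)^2)"
proof -
  have "integrable lborel (indicat_real ({p..q} \<inter> S))"
  proof (rule integrable_real_indicator)
    show "{p..q} \<inter> S \<in> sets lborel" using assms by simp
    have "emeasure lborel ({p..q} \<inter> S) \<le> emeasure lborel {p..q}"
      by (rule emeasure_mono) auto
    then show "emeasure lborel ({p..q} \<inter> S) < \<infinity>" by (simp add: emeasure_lborel_Icc_eq le_less_trans)
  qed
  moreover have "(\<lambda>t. indicat_real {p..q} t *\<^sub>R indicat_real S t) = indicat_real ({p..q} \<inter> S)"
    "(\<lambda>t. indicat_real {p..q} t *\<^sub>R (indicat_real S t)^2) = indicat_real ({p..q} \<inter> S)"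
    by (auto simp: indicator_def)
  ultimately show "set_integrable lborel {p..q} (indicat_real S)"
    "set_integrable lborel {p..q} (\<lambda>t. (indicat_real S t)^2)"
    unfolding set_integrable_def by simp_all
qed

lemma set_integral_indicator:
  fixes A S :: "real set"
  assumes "A \<in> sets borel" "S \<in> sets borel"
  shows "(LINT t:A|lborel. indicat_real S t) = measure lborel (A \<inter> S)"
proof -
  have "(\<lambda>t. indicat_real A t *\<^sub>R indicat_real S t) = indicat_real (A \<inter> S)"
    by (auto simp: indicator_def)
  then show ?thesis unfolding set_lebesgue_integral_def by simp
qed

lemma interval_integral_from_0:
  fixes h :: "real \<Rightarrow> real"
  shows "0 \<le> t \<Longrightarrow> (LBINT u=0..t. h u) = (LINT u:{0<..<t}|lborel. h u)"
    "t \<le> 0 \<Longrightarrow> (LBINT u=0..t. h u) = - (LINT u:{t<..<0}|lborel. h u)"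
  by (auto simp: interval_lebesgue_integral_def zero_ereal_def set_lebesgue_integral_def)

definition ramp :: "real \<Rightarrow> real" where
  "ramp = (\<lambda>t. LBINT u=0..t. indicat_real {-1..1} u)"

lemma ramp_wderiv: "is_wderiv ramp (indicat_real {-1..1})"
  unfolding ramp_def by (rule is_wderiv_primitive) (auto intro: set_integrable_indicator_Icc)

lemma ramp_outside:
  shows "1 \<le> t \<Longrightarrow> ramp t = 1" and "t \<le> -1 \<Longrightarrow> ramp t = -1"
proof -
  assume "1 \<le> t"
  then have "{0<..<t} \<inter> {-1..1} - {0<..<1} \<subseteq> {1::real}" by auto
  then have "measure lborel ({0<..<t} \<inter> {-1..1}) = measure lborel {0<..<1::real}"
    using \<open>1 \<le> t\<close> by (intro measure_eq_AE AE_I[of _ _ "{1}"]) auto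
  then show "ramp t = 1"
    unfolding ramp_def using \<open>1 \<le> t\<close> by (simp add: interval_integral_from_0 set_integral_indicator)
next
  assume "t \<le> -1"
  then have "measure lborel ({t<..<0} \<inter> {-1..1}) = measure lborel {-1<..<0::real}"
    by (intro measure_eq_AE AE_I[of _ _ "{-1}"]) auto
  then show "ramp t = -1"
    unfolding ramp_def using \<open>t \<le> -1\<close> by (simp add: interval_integral_from_0 set_integral_indicator)
qed

lemma ramp_in_W_set: "ramp \<in> W_set"
proof -
  have c: "continuous_on UNIV ramp" by (rule is_wderiv_continuous[OF ramp_wderiv])
  have "set_integrable lborel {..0} (\<lambda>t. (ramp t + 1)^2)"
    by (rule set_integrable_square_if_continuous_vanishing[of _ _ "-1" 1])
      (use c ramp_outside(2) in \<open>auto intro!: continuous_intros\<close>)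
  moreover have "set_integrable lborel {0..} (\<lambda>t. (ramp t - 1)^2)"
    by (rule set_integrable_square_if_continuous_vanishing[of _ _ "-1" 1])
      (use c ramp_outside(1) in \<open>auto intro!: continuous_intros\<close>)
  moreover have "set_integrable lborel S (\<lambda>t. (wderiv ramp t)^2)" if "S \<in> sets borel" for S
  proof (rule is_wderiv_set_integrable_wderiv_square[OF ramp_wderiv that])
    have "(\<lambda>t. (indicat_real {-1..1::real} t)^2) = indicat_real {-1..1}"
      by (auto simp: indicator_def)
    then show "set_integrable lborel S (\<lambda>t. (indicat_real {-1..1::real} t)^2)"
      by (auto intro!: set_integrable_of_integrable that simp: emeasure_lborel_Icc_eq)
  qed
  ultimately show ?thesis
    unfolding W_set_def using is_wderiv_imp_H1loc[OF ramp_wderiv] by auto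
qed

lemma H1_scaled:
  assumes v: "v \<in> H1"
  shows "(\<lambda>t. c * v t) \<in> H1" "H1_norm (\<lambda>t. c * v t) = \<bar>c\<bar> * H1_norm v"
    "AE t in lborel. wderiv (\<lambda>t. c * v t) t = c * wderiv v t"
proof -
  have gv: "is_wderiv v (wderiv v)" by (rule H1_wderiv[OF v])
  have g: "is_wderiv (\<lambda>t. c * v t) (\<lambda>t. c * wderiv v t)" by (rule is_wderiv_scaled[OF gv])
  show ae: "AE t in lborel. wderiv (\<lambda>t. c * v t) t = c * wderiv v t" by (rule is_wderiv_AE_wderiv[OF g])
  have [measurable]: "wderiv (\<lambda>t. c * v t) \<in> borel_measurable borel" "wderiv v \<in> borel_measurable borel"
    "v \<in> borel_measurable borel"
    using gv g by (auto intro: is_wderiv_borel_measurable_deriv is_wderiv_borel_measurable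
        wderiv_is_wderiv is_wderiv_imp_H1loc)
  have ae2: "AE t in lborel. (wderiv (\<lambda>t. c * v t) t)^2 = c^2 * (wderiv v t)^2"
    using ae by eventually_elim (simp add: power_mult_distrib)
  then have "integrable lborel (\<lambda>t. (wderiv (\<lambda>t. c * v t) t)^2)"
    using H1_integrable(2)[OF v] by (subst integrable_cong_AE[OF _ _ ae2]) auto
  then show "(\<lambda>t. c * v t) \<in> H1"
    unfolding H1_def using is_wderiv_imp_H1loc[OF g] H1_integrable(1)[OF v]
    by (simp add: power_mult_distrib)
  have "(LINT t|lborel. (c * v t)^2 + (wderiv (\<lambda>t. c * v t) t)^2)
      = (LINT t|lborel. c^2 * ((v t)^2 + (wderiv v t)^2))"
    using ae2 by (intro integral_cong_AE) (auto simp: power_mult_distrib algebra_simps)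
  then show "H1_norm (\<lambda>t. c * v t) = \<bar>c\<bar> * H1_norm v"
    unfolding H1_norm_def by (simp add: real_sqrt_mult)
qed

definition hat_slope :: "real \<Rightarrow> real" where
  "hat_slope = (\<lambda>t. indicat_real {0..1} t - indicat_real {1<..2} t)"

definition hat :: "real \<Rightarrow> real" where
  "hat = (\<lambda>t. LBINT u=0..t. hat_slope u)"

lemma hat_slope_square: "(\<lambda>t. (hat_slope t)^2) = indicat_real {0..2}"
  by (auto simp: hat_slope_def indicator_def)

lemma hat_wderiv: "is_wderiv hat hat_slope"
  unfolding hat_def
proof (rule is_wderiv_primitive)
  show "set_integrable lborel {p..q} hat_slope" for p q
    unfolding hat_slope_def by (intro set_integral_diff(1) set_integrable_indicator_Icc) auto
  show "set_integrable lborel {p..q} (\<lambda>t. (hat_slope t)^2)" for p q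
    unfolding hat_slope_square by (rule set_integrable_indicator_Icc) auto
qed

lemma hat_outside: "t \<notin> {0..2} \<Longrightarrow> hat t = 0"
proof -
  have box: "(LINT u:{p<..<q}|lborel. hat_slope u)
      = measure lborel ({p<..<q} \<inter> {0..1}) - measure lborel ({p<..<q} \<inter> {1<..2})" for p q :: real
  proof -
    have "set_integrable lborel {p<..<q} (indicat_real S)" if "S \<in> sets borel" for S
      by (rule set_integrable_subset[OF set_integrable_indicator_Icc(1)[OF that, of p q]]) auto
    then show ?thesis
      unfolding hat_slope_def by (subst set_integral_diff(2)) (auto simp: set_integral_indicator)
  qed
  assume t: "t \<notin> {0..2}"
  show "hat t = 0"
  proof (cases "t < 0")
    case True
    then have "{t<..<0} \<inter> {0..1} = {}" "{t<..<0} \<inter> {1<..2} = ({} :: real set)" by auto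
    then show ?thesis unfolding hat_def using True by (simp add: interval_integral_from_0 box)
  next
    case False
    then have "{0<..<t} \<inter> {0..1} = {0<..1}" "{0<..<t} \<inter> {1<..2} = {1<..2::real}"
      using t by auto
    then show ?thesis unfolding hat_def using False by (simp add: interval_integral_from_0 box)
  qed
qed

lemma hat_in_H1: "hat \<in> H1"
proof -
  have "set_integrable lborel UNIV (\<lambda>t. (hat t)^2)"
    by (rule set_integrable_square_if_continuous_vanishing[of _ _ 0 2])
      (use is_wderiv_continuous[OF hat_wderiv] hat_outside in auto)
  moreover have "set_integrable lborel UNIV (\<lambda>t. (wderiv hat t)^2)"
    by (rule is_wderiv_set_integrable_wderiv_square[OF hat_wderiv])
      (auto simp: hat_slope_square set_integrable_def emeasure_lborel_Icc_eq)
  ultimately show ?thesis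
    unfolding H1_def set_integrable_def using is_wderiv_imp_H1loc[OF hat_wderiv] by simp
qed

lemma H1_unit_exists: "\<exists>v. v \<in> H1 \<and> H1_norm v = 1"
proof -
  have [measurable]: "wderiv hat \<in> borel_measurable borel"
    by (rule is_wderiv_borel_measurable_deriv[OF wderiv_is_wderiv[OF is_wderiv_imp_H1loc[OF hat_wderiv]]])
  have "(LINT t|lborel. (wderiv hat t)^2) = (LINT t|lborel. indicat_real {0..2::real} t)"
    using is_wderiv_AE_wderiv[OF hat_wderiv]
    by (intro integral_cong_AE) (auto simp: hat_slope_square[symmetric] hat_slope_def elim!: eventually_mono)
  then have "(LINT t|lborel. (wderiv hat t)^2) = 2" by simp
  moreover have "0 \<le> (LINT t|lborel. (hat t)^2)" by simp
  ultimately have "0 < (LINT t|lborel. (hat t)^2) + (LINT t|lborel. (wderiv hat t)^2)" by linarith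
  then have "0 < H1_norm hat"
    unfolding H1_norm_def using H1_integrable[OF hat_in_H1] by simp
  then show ?thesis
    using H1_scaled(1,2)[OF hat_in_H1, of "1 / H1_norm hat"] by auto
qed

section \<open>The energy functional\<close>

lemma DERIV_abs_diff_le:
  fixes f f' :: "real \<Rightarrow> real"
  assumes d: "\<And>y. y \<in> {-K..K} \<Longrightarrow> (f has_real_derivative f' y) (at y)"
    and b: "\<And>y. y \<in> {-K..K} \<Longrightarrow> \<bar>f' y\<bar> \<le> L"
    and y: "y \<in> {-K..K}" and z: "z \<in> {-K..K}"
  shows "\<bar>f z - f y\<bar> \<le> L * \<bar>z - y\<bar>"
proof -
  have *: "\<bar>f q - f p\<bar> \<le> L * \<bar>q - p\<bar>" if pq: "p < q" "p \<in> {-K..K}" "q \<in> {-K..K}" for p q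
  proof -
    obtain w where w: "p < w" "w < q" "f q - f p = (q - p) * f' w"
      using MVT2[OF pq(1), of f f'] d pq by force
    with pq have "\<bar>f' w\<bar> \<le> L" by (intro b) auto
    then show ?thesis using w pq(1) by (simp add: abs_mult mult.commute mult_right_mono)
  qed
  show ?thesis
    using *[OF _ y z] *[OF _ z y] by (cases y z rule: linorder_cases) (auto simp: abs_minus_commute)
qed

lemma C2_local_bounds:
  fixes f f' f'' :: "real \<Rightarrow> real"
  assumes d: "\<And>y. (f has_real_derivative f' y) (at y)"
    and d2: "\<And>y. (f' has_real_derivative f'' y) (at y)"
    and c: "continuous_on UNIV f''"
  shows "\<exists>L\<ge>0. \<forall>y\<in>{-K..K}. \<forall>z\<in>{-K..K}. \<bar>f' z - f' y\<bar> \<le> L * \<bar>z - y\<bar>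
      \<and> \<bar>f z - f y - f' y * (z - y)\<bar> \<le> L * (z - y)^2"
proof -
  have "compact (f'' ` {-K..K})"
    by (intro compact_continuous_image continuous_on_subset[OF c]) auto
  then obtain L0 where L0: "\<And>w. w \<in> f'' ` {-K..K} \<Longrightarrow> norm w \<le> L0"
    using compact_imp_bounded bounded_iff by metis
  define L where "L = max L0 0"
  have lip: "\<bar>f' z - f' y\<bar> \<le> L * \<bar>z - y\<bar>" if "y \<in> {-K..K}" "z \<in> {-K..K}" for y z
    using L0 by (intro DERIV_abs_diff_le[OF d2 _ that]) (force simp: L_def)
  have taylor: "\<bar>f q - f p - f' r * (q - p)\<bar> \<le> L * (q - p)^2"
    if pq: "p < q" "p \<in> {-K..K}" "q \<in> {-K..K}" and r: "r = p \<or> r = q" for p q r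
  proof -
    obtain w where w: "p < w" "w < q" "f q - f p = (q - p) * f' w"
      using MVT2[OF pq(1), of f f'] d by force
    have "\<bar>f' w - f' r\<bar> \<le> L * \<bar>w - r\<bar>" using w pq r by (intro lip) auto
    also have "\<dots> \<le> L * (q - p)" using w r pq(1) unfolding L_def by (intro mult_left_mono) auto
    finally have "(q - p) * \<bar>f' w - f' r\<bar> \<le> (q - p) * (L * (q - p))"
      using pq(1) by (intro mult_left_mono) auto
    moreover have "f q - f p - f' r * (q - p) = (q - p) * (f' w - f' r)"
      using w(3) by (simp add: algebra_simps)
    then have "\<bar>f q - f p - f' r * (q - p)\<bar> = (q - p) * \<bar>f' w - f' r\<bar>"
      using pq(1) by (simp add: abs_mult)
    ultimately show ?thesis by (simp add: power2_eq_square algebra_simps)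
  qed
  have "\<bar>f z - f y - f' y * (z - y)\<bar> \<le> L * (z - y)^2" if "y \<in> {-K..K}" "z \<in> {-K..K}" for y z
    using taylor[of y z y] taylor[of z y y] that
    by (cases y z rule: linorder_cases) (auto simp: abs_minus_commute power2_commute algebra_simps)
  with lip show ?thesis unfolding L_def by (intro exI[of _ L]) (auto simp: L_def)
qed

definition wells_deviation :: "(real \<Rightarrow> real) \<Rightarrow> real \<Rightarrow> real" where
  "wells_deviation x t = indicator {..0} t * (x t + 1)^2 + indicator {0..} t * (x t - 1)^2"

lemma wells_deviation_nonneg: "0 \<le> wells_deviation x t"
  unfolding wells_deviation_def by (simp add: indicator_def)

lemma integrable_wells_deviation: "x \<in> W_set \<Longrightarrow> integrable lborel (wells_deviation x)"
  unfolding W_set_def set_integrable_def wells_deviation_def[abs_def] by simp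

lemma integrable_wderiv_square_W_set: "x \<in> W_set \<Longrightarrow> integrable lborel (\<lambda>t. (wderiv x t)^2)"
proof -
  assume "x \<in> W_set"
  then have "set_integrable lborel ({..0} \<union> {0..}) (\<lambda>t. (wderiv x t)^2)"
    unfolding W_set_def by (intro set_integrable_Un) auto
  moreover have "{..0} \<union> {0..} = (UNIV :: real set)" by auto
  ultimately show ?thesis unfolding set_integrable_def by simp
qed

locale double_well_energy =
  fixes V a :: "real \<Rightarrow> real" and \<epsilon> a_min :: real
  assumes V_diff: "\<forall>x. V differentiable at x"
    and V'_diff: "\<forall>x. deriv V differentiable at x"
    and V''_cont: "continuous_on UNIV (deriv (deriv V))"
    and V_nonneg: "\<And>x. V x \<ge> 0"
    and V_wells: "V (-1) = 0" "V 1 = 0"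
    and V_coercive: "filterlim V at_top at_infinity"
    and a_bdd: "bounded (range a)"
    and a_cont: "continuous_on UNIV a"
    and a_ge_a_min: "\<And>t. a_min \<le> a t"
    and a_min_pos: "0 < a_min"
begin

lemma V_has_derivative: "(V has_real_derivative deriv V y) (at y)"
  using V_diff DERIV_deriv_iff_real_differentiable by blast

lemma deriv_V_has_derivative: "(deriv V has_real_derivative deriv (deriv V) y) (at y)"
  using V'_diff DERIV_deriv_iff_real_differentiable by blast

lemma deriv_V_wells: "deriv V (-1) = 0" "deriv V 1 = 0"
  by (rule DERIV_local_min[OF V_has_derivative, of 1], use V_wells V_nonneg in simp_all)+

lemma a_pos: "0 < a t"
  using a_ge_a_min[of t] a_min_pos by simp

lemma a_le_bound: "\<exists>A>0. \<forall>t. a t \<le> A"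
proof -
  obtain A where "\<forall>y\<in>range a. norm y \<le> A" using a_bdd bounded_iff by metis
  then have "\<forall>t. a t \<le> max A 1" by (metis rangeI real_norm_def abs_le_D1 max.coboundedI1)
  then show ?thesis by (intro exI[of _ "max A 1"]) auto
qed

text \<open>\<open>V\<close> and \<open>V'\<close> vanish at the wells, so these are the Taylor bounds centred at \<open>\<plusminus>1\<close>.\<close>

lemma V_le_dist_wells:
  assumes "1 \<le> K" "\<bar>z\<bar> \<le> K"
    and L: "\<forall>y\<in>{-K..K}. \<forall>z\<in>{-K..K}. \<bar>deriv V z - deriv V y\<bar> \<le> L * \<bar>z - y\<bar>
      \<and> \<bar>V z - V y - deriv V y * (z - y)\<bar> \<le> L * (z - y)^2"
  shows "V z \<le> L * (z - 1)^2" "V z \<le> L * (z + 1)^2"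
    "\<bar>deriv V z\<bar> \<le> L * \<bar>z - 1\<bar>" "\<bar>deriv V z\<bar> \<le> L * \<bar>z + 1\<bar>"
proof -
  have zK: "z \<in> {-K..K}" and wells: "1 \<in> {-K..K}" "-1 \<in> {-K..K}" using assms by auto
  show "V z \<le> L * (z - 1)^2" "\<bar>deriv V z\<bar> \<le> L * \<bar>z - 1\<bar>"
    using L[rule_format, OF wells(1) zK] V_wells deriv_V_wells by auto
  show "V z \<le> L * (z + 1)^2" "\<bar>deriv V z\<bar> \<le> L * \<bar>z + 1\<bar>"
    using L[rule_format, OF wells(2) zK] V_wells deriv_V_wells by auto
qed

lemma continuous_weighted_V:
  assumes "continuous_on UNIV y"
  shows "continuous_on UNIV (\<lambda>t. a (\<epsilon> * t) * V (y t))"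
    "continuous_on UNIV (\<lambda>t. a (\<epsilon> * t) * deriv V (y t))"
proof -
  have "continuous_on UNIV (\<lambda>t. a (\<epsilon> * t))"
    by (rule continuous_on_compose2[OF a_cont]) (auto intro!: continuous_intros)
  moreover have "continuous_on UNIV V" "continuous_on UNIV (deriv V)"
    using V_has_derivative deriv_V_has_derivative
    by (auto intro!: continuous_at_imp_continuous_on DERIV_isCont)
  ultimately show "continuous_on UNIV (\<lambda>t. a (\<epsilon> * t) * V (y t))"
    "continuous_on UNIV (\<lambda>t. a (\<epsilon> * t) * deriv V (y t))"
    using assms by (auto intro!: continuous_intros continuous_on_compose2[of UNIV _ _ y])
qed

lemma potential_le_wells_deviation:
  assumes xW: "x \<in> W_set"
  shows "\<exists>C\<ge>0. \<forall>t. 0 \<le> a (\<epsilon> * t) * V (x t) \<and> a (\<epsilon> * t) * V (x t) \<le> C * wells_deviation x t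
              \<and> \<bar>a (\<epsilon> * t) * deriv V (x t)\<bar> \<le> C * sqrt (wells_deviation x t)"
proof -
  obtain R where R: "\<forall>t. \<bar>x t\<bar> \<le> R" using W_set_bounded[OF xW] by blast
  define K where "K = max R 1"
  have K: "1 \<le> K" "\<And>t. \<bar>x t\<bar> \<le> K" using R unfolding K_def by (auto intro: max.coboundedI1)
  obtain L where L: "L \<ge> 0" "\<forall>y\<in>{-K..K}. \<forall>z\<in>{-K..K}. \<bar>deriv V z - deriv V y\<bar> \<le> L * \<bar>z - y\<bar>
      \<and> \<bar>V z - V y - deriv V y * (z - y)\<bar> \<le> L * (z - y)^2"
    using C2_local_bounds[OF V_has_derivative deriv_V_has_derivative V''_cont] by blast
  obtain A where A: "A > 0" "\<forall>t. a t \<le> A" using a_le_bound by blast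
  have "0 \<le> a (\<epsilon> * t) * V (x t) \<and> a (\<epsilon> * t) * V (x t) \<le> (A * L) * wells_deviation x t
        \<and> \<bar>a (\<epsilon> * t) * deriv V (x t)\<bar> \<le> (A * L) * sqrt (wells_deviation x t)" for t
  proof -
    note wells = V_le_dist_wells[OF K(1) K(2)[of t] L(2)]
    have a: "0 \<le> a (\<epsilon> * t)" "a (\<epsilon> * t) \<le> A" using a_pos A(2) by (auto intro: less_imp_le)
    have V: "V (x t) \<le> L * wells_deviation x t" and V': "\<bar>deriv V (x t)\<bar> \<le> L * sqrt (wells_deviation x t)"
    proof (atomize (full), cases "t \<le> 0")
      case True
      then have "(x t + 1)^2 \<le> wells_deviation x t" unfolding wells_deviation_def by simp
      then show "V (x t) \<le> L * wells_deviation x t \<and> \<bar>deriv V (x t)\<bar> \<le> L * sqrt (wells_deviation x t)"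
        using wells(2,4) L(1) real_sqrt_le_mono[of "(x t + 1)^2"]
        by (metis mult_left_mono order_trans real_sqrt_abs)
    next
      case False
      then have "(x t - 1)^2 \<le> wells_deviation x t" unfolding wells_deviation_def by simp
      then show "V (x t) \<le> L * wells_deviation x t \<and> \<bar>deriv V (x t)\<bar> \<le> L * sqrt (wells_deviation x t)"
        using wells(1,3) L(1) real_sqrt_le_mono[of "(x t - 1)^2"]
        by (metis mult_left_mono order_trans real_sqrt_abs)
    qed
    have "a (\<epsilon> * t) * V (x t) \<le> A * (L * wells_deviation x t)"
      using a V V_nonneg by (intro mult_mono) auto
    moreover have "\<bar>a (\<epsilon> * t) * deriv V (x t)\<bar> \<le> A * (L * sqrt (wells_deviation x t))"
      using a V' by (simp add: abs_mult) (intro mult_mono, auto)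
    ultimately show ?thesis using a V_nonneg by (simp add: mult_ac)
  qed
  then show ?thesis using A L(1) by (intro exI[of _ "A * L"]) auto
qed

definition lagrangian :: "(real \<Rightarrow> real) \<Rightarrow> real \<Rightarrow> real" where
  "lagrangian x t = (1/2) * (wderiv x t)^2 + a (\<epsilon> * t) * V (x t)"

lemma J_eps_eq: "J_eps V a \<epsilon> x = (LINT t|lborel. lagrangian x t)"
  unfolding J_eps_def lagrangian_def by simp

lemma lagrangian_nonneg: "0 \<le> lagrangian x t"
  unfolding lagrangian_def using a_pos[of "\<epsilon> * t"] V_nonneg by (simp add: less_imp_le)

lemma integrable_potential:
  assumes xW: "x \<in> W_set"
  shows "integrable lborel (\<lambda>t. a (\<epsilon> * t) * V (x t))"
proof -
  obtain C where C: "C \<ge> 0" "\<forall>t. 0 \<le> a (\<epsilon> * t) * V (x t) \<and> a (\<epsilon> * t) * V (x t) \<le> C * wells_deviation x t"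
    using potential_le_wells_deviation[OF xW] by blast
  show ?thesis
  proof (rule Bochner_Integration.integrable_bound)
    show "integrable lborel (\<lambda>t. C * wells_deviation x t)"
      using integrable_wells_deviation[OF xW] by simp
    show "(\<lambda>t. a (\<epsilon> * t) * V (x t)) \<in> borel_measurable lborel"
      using borel_measurable_continuous_onI[OF continuous_weighted_V(1)[OF
            is_wderiv_continuous[OF W_set_wderiv[OF xW]]]] by simp
    show "AE t in lborel. norm (a (\<epsilon> * t) * V (x t)) \<le> norm (C * wells_deviation x t)"
      using C wells_deviation_nonneg[of x] by (intro AE_I2) (simp add: abs_of_nonneg)
  qed
qed

lemma integrable_lagrangian: "x \<in> W_set \<Longrightarrow> integrable lborel (lagrangian x)"
  unfolding lagrangian_def[abs_def]
  using integrable_wderiv_square_W_set integrable_potential by simp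

lemma J_eps_nonneg: "0 \<le> J_eps V a \<epsilon> x"
  unfolding J_eps_eq by (rule Bochner_Integration.integral_nonneg) (simp add: lagrangian_nonneg)

definition dJ_density :: "(real \<Rightarrow> real) \<Rightarrow> (real \<Rightarrow> real) \<Rightarrow> real \<Rightarrow> real" where
  "dJ_density x v t = wderiv x t * wderiv v t + a (\<epsilon> * t) * deriv V (x t) * v t"

lemma dJ_eps_eq: "dJ_eps V a \<epsilon> x v = (LINT t|lborel. dJ_density x v t)"
  unfolding dJ_eps_def dJ_density_def by simp

lemma borel_measurable_dJ_density:
  assumes "x \<in> W_set" "v \<in> H1"
  shows "dJ_density x v \<in> borel_measurable borel"
proof -
  have gx: "is_wderiv x (wderiv x)" and gv: "is_wderiv v (wderiv v)"
    using assms by (auto intro: W_set_wderiv H1_wderiv)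
  have [measurable]: "wderiv x \<in> borel_measurable borel" "wderiv v \<in> borel_measurable borel"
    "v \<in> borel_measurable borel" "(\<lambda>t. a (\<epsilon> * t) * deriv V (x t)) \<in> borel_measurable borel"
    using gx gv borel_measurable_continuous_onI[OF continuous_weighted_V(2)[OF is_wderiv_continuous[OF gx]]]
    by (auto intro: is_wderiv_borel_measurable_deriv is_wderiv_borel_measurable)
  show ?thesis unfolding dJ_density_def[abs_def] by measurable
qed

lemma integrable_dJ_density:
  assumes xW: "x \<in> W_set" and v: "v \<in> H1"
  shows "integrable lborel (dJ_density x v)"
proof -
  obtain C where C: "C \<ge> 0" "\<forall>t. \<bar>a (\<epsilon> * t) * deriv V (x t)\<bar> \<le> C * sqrt (wells_deviation x t)"
    using potential_le_wells_deviation[OF xW] by blast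
  let ?bound = "\<lambda>t. ((wderiv x t)^2 + (wderiv v t)^2) / 2 + C * ((wells_deviation x t + (v t)^2) / 2)"
  have "integrable lborel ?bound"
    using integrable_wderiv_square_W_set[OF xW] H1_integrable[OF v] integrable_wells_deviation[OF xW] by simp
  moreover have "dJ_density x v \<in> borel_measurable lborel"
    using borel_measurable_dJ_density[OF xW v] by simp
  moreover have "\<bar>dJ_density x v t\<bar> \<le> ?bound t" for t
  proof -
    have "\<bar>wderiv x t\<bar> * \<bar>wderiv v t\<bar> \<le> ((wderiv x t)^2 + (wderiv v t)^2) / 2"
      using zero_le_power2[of "\<bar>wderiv x t\<bar> - \<bar>wderiv v t\<bar>"]
      by (simp add: power2_eq_square algebra_simps abs_mult_self)
    moreover have "sqrt (wells_deviation x t) * \<bar>v t\<bar> \<le> (wells_deviation x t + (v t)^2) / 2"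
      using zero_le_power2[of "sqrt (wells_deviation x t) - \<bar>v t\<bar>"] wells_deviation_nonneg[of x t]
      by (simp add: power2_eq_square algebra_simps abs_mult_self)
    then have "C * (sqrt (wells_deviation x t) * \<bar>v t\<bar>) \<le> C * ((wells_deviation x t + (v t)^2) / 2)"
      using C(1) by (rule mult_left_mono)
    moreover have "\<bar>a (\<epsilon> * t) * deriv V (x t) * v t\<bar> \<le> C * sqrt (wells_deviation x t) * \<bar>v t\<bar>"
      using C(2) by (simp add: abs_mult mult_right_mono)
    moreover have "\<bar>dJ_density x v t\<bar>
        \<le> \<bar>wderiv x t\<bar> * \<bar>wderiv v t\<bar> + \<bar>a (\<epsilon> * t) * deriv V (x t) * v t\<bar>"
      unfolding dJ_density_def by (metis abs_mult abs_triangle_ineq)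
    ultimately show ?thesis by (simp only: mult.assoc)
  qed
  then have "AE t in lborel. norm (dJ_density x v t) \<le> norm (?bound t)"
    using C(1) by (intro AE_I2) (simp add: wells_deviation_nonneg)
  ultimately show ?thesis by (rule Bochner_Integration.integrable_bound)
qed

lemma dJ_eps_scaled:
  assumes "x \<in> W_set" "v \<in> H1"
  shows "dJ_eps V a \<epsilon> x (\<lambda>t. c * v t) = c * dJ_eps V a \<epsilon> x v"
proof -
  have "(LINT t|lborel. dJ_density x (\<lambda>t. c * v t) t) = (LINT t|lborel. c * dJ_density x v t)"
  proof (rule integral_cong_AE)
    show "dJ_density x (\<lambda>t. c * v t) \<in> borel_measurable lborel"
      using borel_measurable_dJ_density[OF assms(1) H1_scaled(1)[OF assms(2)]] by simp
    show "(\<lambda>t. c * dJ_density x v t) \<in> borel_measurable lborel"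
      using borel_measurable_dJ_density[OF assms] by simp
    show "AE t in lborel. dJ_density x (\<lambda>t. c * v t) t = c * dJ_density x v t"
      using H1_scaled(3)[OF assms(2), of c] by eventually_elim (simp add: dJ_density_def algebra_simps)
  qed
  then show ?thesis unfolding dJ_eps_eq by simp
qed

lemma potential_second_order:
  assumes "\<bar>z\<bar> \<le> K" "\<bar>h\<bar> \<le> 4"
    and L: "0 \<le> L" "\<forall>y\<in>{-(K+4)..K+4}. \<forall>z\<in>{-(K+4)..K+4}.
      \<bar>V z - V y - deriv V y * (z - y)\<bar> \<le> L * (z - y)^2"
    and A: "\<forall>t. a t \<le> A"
  shows "a s * V (z - h) \<le> a s * V z - h * (a s * deriv V z) + A * L * h^2"
proof -
  have "z \<in> {-(K+4)..K+4}" "z - h \<in> {-(K+4)..K+4}" using assms(1,2) by auto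
  from L(2)[rule_format, OF this] have "V (z - h) \<le> V z - h * deriv V z + L * h^2"
    by (simp add: algebra_simps power2_eq_square)
  moreover have a: "0 \<le> a s" "a s \<le> A" using a_pos A by (auto intro: less_imp_le)
  ultimately have "a s * V (z - h) \<le> a s * (V z - h * deriv V z) + a s * (L * h^2)"
    by (simp add: mult_left_mono flip: distrib_left)
  also have "\<dots> \<le> a s * (V z - h * deriv V z) + A * (L * h^2)"
    using a L(1) by (simp add: mult_right_mono)
  finally show ?thesis by (simp add: algebra_simps)
qed

text \<open>Unit vectors of \<open>H\<^sup>1\<close> are bounded by 4, so the perturbation \<open>x - \<tau> v\<close> stays in a fixed interval
  on which the Taylor bound for \<open>V\<close> applies with the constant \<open>L\<close>.\<close>

lemma J_eps_second_order:
  assumes xW: "x \<in> W_set" and xK: "\<forall>t. \<bar>x t\<bar> \<le> K"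
    and L: "0 \<le> L" "\<forall>y\<in>{-(K+4)..K+4}. \<forall>z\<in>{-(K+4)..K+4}.
      \<bar>V z - V y - deriv V y * (z - y)\<bar> \<le> L * (z - y)^2"
    and A: "\<forall>t. a t \<le> A"
    and v: "v \<in> H1" "H1_norm v = 1"
    and \<tau>: "0 \<le> \<tau>" "\<tau> \<le> 1"
  shows "J_eps V a \<epsilon> (\<lambda>t. x t - \<tau> * v t) \<le> J_eps V a \<epsilon> x - \<tau> * dJ_eps V a \<epsilon> x v + \<tau>^2 * (1/2 + A * L)"
proof -
  define y where "y = (\<lambda>t. x t - \<tau> * v t)"
  define H where "H = (\<lambda>t. lagrangian x t - \<tau> * dJ_density x v t
      + \<tau>^2 * (1/2 * (wderiv v t)^2 + (A * L) * (v t)^2))"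
  have pointwise: "lagrangian y t \<le> H t" if wy: "wderiv y t = wderiv x t - \<tau> * wderiv v t" for t
  proof -
    have "\<bar>\<tau> * v t\<bar> \<le> 4"
      using mult_mono[of \<tau> 1 "\<bar>v t\<bar>" 4] \<tau> H1_unit_abs_le[OF v, of t] by (simp add: abs_mult)
    from potential_second_order[OF xK[rule_format, of t] this L A, where s = "\<epsilon> * t"]
    show ?thesis
      unfolding lagrangian_def H_def dJ_density_def wy by (simp add: y_def power2_eq_square algebra_simps)
  qed
  have "J_eps V a \<epsilon> y \<le> (LINT t|lborel. H t)"
    unfolding J_eps_eq
  proof (rule integral_mono_AE)
    show "integrable lborel (lagrangian y)"
      unfolding y_def by (rule integrable_lagrangian[OF W_set_diff_scaled(1)[OF xW v(1)]])
    show "integrable lborel H"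
      unfolding H_def using integrable_lagrangian[OF xW] integrable_dJ_density[OF xW v(1)] H1_integrable[OF v(1)]
      by simp
    show "AE t in lborel. lagrangian y t \<le> H t"
      using W_set_diff_scaled(2)[OF xW v(1), of \<tau>] unfolding y_def[symmetric] by eventually_elim (rule pointwise)
  qed
  also have "(LINT t|lborel. H t) = J_eps V a \<epsilon> x - \<tau> * dJ_eps V a \<epsilon> x v
      + \<tau>^2 * (1/2 * (LINT t|lborel. (wderiv v t)^2) + (A * L) * (LINT t|lborel. (v t)^2))"
    unfolding H_def J_eps_eq dJ_eps_eq
    using integrable_lagrangian[OF xW] integrable_dJ_density[OF xW v(1)] H1_integrable[OF v(1)] by simp
  also have "\<dots> \<le> J_eps V a \<epsilon> x - \<tau> * dJ_eps V a \<epsilon> x v + \<tau>^2 * (1/2 + A * L)"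
  proof -
    have "0 \<le> A" using A a_pos[of 0] by (metis less_le_not_le order_trans)
    then have "1/2 * (LINT t|lborel. (wderiv v t)^2) + (A * L) * (LINT t|lborel. (v t)^2) \<le> 1/2 * 1 + (A * L) * 1"
      using H1_norm_eq_1[OF v] L(1) by (intro add_mono mult_left_mono) auto
    then show ?thesis by (simp add: mult_left_mono)
  qed
  finally show ?thesis unfolding y_def .
qed

lemma integral_wderiv_square_le_J_eps:
  assumes xW: "x \<in> W_set"
  shows "(LINT t|lborel. (wderiv x t)^2) \<le> 2 * J_eps V a \<epsilon> x"
proof -
  have "(LINT t|lborel. 1/2 * (wderiv x t)^2) \<le> (LINT t|lborel. lagrangian x t)"
  proof (rule integral_mono[OF _ integrable_lagrangian[OF xW]])
    show "integrable lborel (\<lambda>t. 1/2 * (wderiv x t)^2)"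
      using integrable_wderiv_square_W_set[OF xW] by simp
    show "1/2 * (wderiv x t)^2 \<le> lagrangian x t" for t
      unfolding lagrangian_def using a_pos[of "\<epsilon> * t"] V_nonneg[of "x t"] by simp
  qed
  then show ?thesis unfolding J_eps_eq by simp
qed

lemma set_integral_potential_le_J_eps:
  assumes xW: "x \<in> W_set"
  shows "set_integrable lborel {p<..<q} (\<lambda>t. a (\<epsilon> * t) * V (x t))"
    "(LINT t:{p<..<q}|lborel. a (\<epsilon> * t) * V (x t)) \<le> J_eps V a \<epsilon> x"
proof -
  have potential: "integrable lborel (\<lambda>t. a (\<epsilon> * t) * V (x t))" "\<And>t. 0 \<le> a (\<epsilon> * t) * V (x t)"
    using integrable_potential[OF xW] a_pos V_nonneg by (auto intro: less_imp_le mult_nonneg_nonneg)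
  show "set_integrable lborel {p<..<q} (\<lambda>t. a (\<epsilon> * t) * V (x t))"
    by (rule set_integral_box_le_integral_nonneg(1)[OF potential])
  have "(LINT t:{p<..<q}|lborel. a (\<epsilon> * t) * V (x t)) \<le> (LINT t|lborel. a (\<epsilon> * t) * V (x t))"
    by (rule set_integral_box_le_integral_nonneg(2)[OF potential])
  also have "\<dots> \<le> J_eps V a \<epsilon> x"
    unfolding J_eps_eq by (rule integral_mono[OF potential(1) integrable_lagrangian[OF xW]])
      (simp add: lagrangian_def)
  finally show "(LINT t:{p<..<q}|lborel. a (\<epsilon> * t) * V (x t)) \<le> J_eps V a \<epsilon> x" .
qed

text \<open>Coercivity of \<open>V\<close>: a point where \<open>\<bar>x\<bar>\<close> is large forces \<open>\<bar>x\<bar>\<close> to stay large on a unit interval,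
  because the kinetic energy controls the oscillation of \<open>x\<close>, and there the potential
  energy alone exceeds the energy level.\<close>

lemma sublevel_set_uniformly_bounded:
  "\<exists>R. \<forall>x\<in>W_set. J_eps V a \<epsilon> x \<le> E \<longrightarrow> (\<forall>s. \<bar>x s\<bar> \<le> R)"
proof -
  have "eventually (\<lambda>y. (E + 1) / a_min \<le> V y) at_infinity"
    using V_coercive unfolding filterlim_at_top by blast
  then obtain b where b: "\<And>y. b \<le> norm y \<Longrightarrow> (E + 1) / a_min \<le> V y"
    unfolding eventually_at_infinity by blast
  define R where "R = max b 0 + \<bar>E\<bar> + 1"
  have "\<bar>x s\<bar> \<le> R" if xW: "x \<in> W_set" and J: "J_eps V a \<epsilon> x \<le> E" for x s
  proof (rule ccontr)
    assume "\<not> \<bar>x s\<bar> \<le> R"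
    have high: "E + 1 \<le> a (\<epsilon> * r) * V (x r)" if r: "r \<in> {s - 1<..<s}" for r
    proof -
      have "\<bar>x s - x r\<bar> \<le> ((LINT t:{r<..<s}|lborel. (wderiv x t)^2) + (s - r)) / 2"
        using r by (intro is_wderiv_oscillation_bound[OF W_set_wderiv[OF xW]]) auto
      also have "\<dots> \<le> (2 * E + 1) / 2"
        using set_integral_box_le_integral_nonneg(2)[OF integrable_wderiv_square_W_set[OF xW], of r s]
          integral_wderiv_square_le_J_eps[OF xW] J r by simp
      finally have "b \<le> norm (x r)"
        using \<open>\<not> \<bar>x s\<bar> \<le> R\<close> unfolding R_def real_norm_def by argo
      then have "E + 1 \<le> a_min * V (x r)"
        using b[of "x r"] a_min_pos by (simp add: field_simps)
      also have "\<dots> \<le> a (\<epsilon> * r) * V (x r)"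
        using a_ge_a_min V_nonneg by (intro mult_right_mono) auto
      finally show ?thesis .
    qed
    have "set_integrable lborel {s - 1<..<s} (\<lambda>t. E + 1)"
      unfolding set_integrable_def by (simp add: integrable_real_indicator)
    then have "(LINT t:{s - 1<..<s}|lborel. E + 1) \<le> (LINT t:{s - 1<..<s}|lborel. a (\<epsilon> * t) * V (x t))"
      by (rule set_integral_mono[OF _ set_integral_potential_le_J_eps(1)[OF xW] high])
    then have "E + 1 \<le> J_eps V a \<epsilon> x"
      using set_integral_potential_le_J_eps(2)[OF xW, of "s - 1" s] by (simp add: set_lebesgue_integral_def)
    then show False using J by simp
  qed
  then show ?thesis by blast
qed

lemma B_eps_le_J_eps: "x \<in> W_set \<Longrightarrow> B_eps V a \<epsilon> \<le> J_eps V a \<epsilon> x"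
  unfolding B_eps_def by (rule cInf_lower) (auto intro: bdd_belowI[of _ 0] J_eps_nonneg)

lemma exists_J_eps_less_B_eps:
  assumes "0 < \<eta>"
  shows "\<exists>x\<in>W_set. J_eps V a \<epsilon> x < B_eps V a \<epsilon> + \<eta>"
proof -
  have "J_eps V a \<epsilon> ` W_set \<noteq> {}" using ramp_in_W_set by blast
  moreover have "bdd_below (J_eps V a \<epsilon> ` W_set)" by (auto intro: bdd_belowI[of _ 0] J_eps_nonneg)
  ultimately show ?thesis
    using cInf_less_iff[of "J_eps V a \<epsilon> ` W_set" "B_eps V a \<epsilon> + \<eta>"] assms unfolding B_eps_def by auto
qed

text \<open>The set of values of \<open>J'(x)\<close> on unit vectors is symmetric and nonempty, so its supremum is
  nonnegative and a large \<open>\<bar>\<parallel>J'(x)\<parallel>\<^sub>*\<bar>\<close> is attained, up to a factor 2, in some unit direction.\<close>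

lemma exists_unit_direction_if_dJ_norm_large:
  assumes xW: "x \<in> W_set" and \<sigma>: "0 < \<sigma>" "\<sigma> \<le> \<bar>dJ_norm V a \<epsilon> x\<bar>"
  shows "\<exists>v. v \<in> H1 \<and> H1_norm v = 1 \<and> \<sigma> / 2 < dJ_eps V a \<epsilon> x v"
proof -
  define D where "D = {dJ_eps V a \<epsilon> x v | v. v \<in> H1 \<and> H1_norm v = 1}"
  have "\<exists>d\<in>D. \<sigma> / 2 < d"
  proof (cases "bdd_above D")
    case False
    then show ?thesis unfolding bdd_above_def by (meson not_le)
  next
    case True
    obtain v where v: "v \<in> H1" "H1_norm v = 1" using H1_unit_exists by blast
    have "dJ_eps V a \<epsilon> x v \<in> D" using v unfolding D_def by blast
    moreover have "- dJ_eps V a \<epsilon> x v \<in> D"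
      using v H1_scaled(1,2)[OF v(1), of "-1"] dJ_eps_scaled[OF xW v(1), of "-1"]
      unfolding D_def by (intro CollectI exI[of _ "\<lambda>t. -1 * v t"]) simp
    ultimately have "dJ_eps V a \<epsilon> x v \<le> Sup D" "- dJ_eps V a \<epsilon> x v \<le> Sup D" "D \<noteq> {}"
      using cSup_upper[OF _ True] by blast+
    then have "0 \<le> Sup D" by linarith
    then have "\<sigma> / 2 < Sup D"
      using \<sigma> unfolding D_def dJ_norm_def by linarith
    then show ?thesis using less_cSup_iff[OF \<open>D \<noteq> {}\<close> True] by blast
  qed
  then show ?thesis unfolding D_def by blast
qed

text \<open>If \<open>J(x) < B\<^sub>\<epsilon> + \<eta>\<close> with \<open>\<eta> \<le> \<tau> \<sigma> / 4\<close> and \<open>\<tau> M \<le> \<sigma> / 4\<close>, a unit direction \<open>v\<close> with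
  \<open>J'(x) v > \<sigma> / 2\<close> would give \<open>J(x - \<tau> v) < B\<^sub>\<epsilon>\<close> by the second order bound.\<close>

lemma near_minimizer_dJ_norm_small:
  assumes \<sigma>: "0 < \<sigma>"
  shows "\<exists>x\<in>W_set. J_eps V a \<epsilon> x < B_eps V a \<epsilon> + \<sigma> \<and> \<bar>dJ_norm V a \<epsilon> x\<bar> < \<sigma>"
proof -
  define B where "B = B_eps V a \<epsilon>"
  obtain R where R: "\<forall>x\<in>W_set. J_eps V a \<epsilon> x \<le> B + 1 \<longrightarrow> (\<forall>s. \<bar>x s\<bar> \<le> R)"
    using sublevel_set_uniformly_bounded by blast
  obtain L where L: "0 \<le> L" "\<forall>y\<in>{-(R+4)..R+4}. \<forall>z\<in>{-(R+4)..R+4}. \<bar>deriv V z - deriv V y\<bar> \<le> L * \<bar>z - y\<bar>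
      \<and> \<bar>V z - V y - deriv V y * (z - y)\<bar> \<le> L * (z - y)^2"
    using C2_local_bounds[OF V_has_derivative deriv_V_has_derivative V''_cont] by blast
  obtain A where A: "A > 0" "\<forall>t. a t \<le> A" using a_le_bound by blast
  define M where "M = 1/2 + A * L"
  have M: "0 < M" unfolding M_def using A L by (simp add: add_pos_nonneg)
  define \<tau> where "\<tau> = min 1 (\<sigma> / (4 * M))"
  have \<tau>: "0 < \<tau>" "\<tau> \<le> 1" "\<tau> * M \<le> \<sigma> / 4"
    unfolding \<tau>_def using \<sigma> M by (auto simp: min_def field_simps)
  define \<eta> where "\<eta> = min 1 (\<tau> * \<sigma> / 4)"
  have \<eta>: "0 < \<eta>" "\<eta> \<le> 1" "\<eta> \<le> \<tau> * \<sigma> / 4"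
    unfolding \<eta>_def using \<sigma> \<tau> by auto
  have "\<tau> * \<sigma> \<le> \<sigma>" using mult_left_le_one_le[of \<sigma> \<tau>] \<sigma> \<tau> by simp
  with \<eta>(3) \<sigma> have \<eta>_le_\<sigma>: "\<eta> \<le> \<sigma>" by linarith
  obtain x where xW: "x \<in> W_set" and Jx: "J_eps V a \<epsilon> x < B + \<eta>"
    using exists_J_eps_less_B_eps[OF \<eta>(1)] unfolding B_def by blast
  have "J_eps V a \<epsilon> x \<le> B + 1" using Jx \<eta>(2) by linarith
  with R xW have xR: "\<forall>t. \<bar>x t\<bar> \<le> R" by blast
  have "\<bar>dJ_norm V a \<epsilon> x\<bar> < \<sigma>"
  proof (rule ccontr)
    assume "\<not> ?thesis"
    then obtain v where v: "v \<in> H1" "H1_norm v = 1" and dv: "\<sigma> / 2 < dJ_eps V a \<epsilon> x v"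
      using exists_unit_direction_if_dJ_norm_large[OF xW \<sigma>] by auto
    have "B \<le> J_eps V a \<epsilon> (\<lambda>t. x t - \<tau> * v t)"
      unfolding B_def by (rule B_eps_le_J_eps[OF W_set_diff_scaled(1)[OF xW v(1)]])
    also have "\<dots> \<le> J_eps V a \<epsilon> x - \<tau> * dJ_eps V a \<epsilon> x v + \<tau>^2 * M"
      unfolding M_def using L(2) \<tau>(1,2) by (intro J_eps_second_order[OF xW xR L(1) _ A(2) v]) auto
    also have "\<dots> < B + \<eta> - \<tau> * (\<sigma> / 2) + \<tau> * (\<sigma> / 4)"
    proof -
      have "\<tau> * (\<sigma> / 2) < \<tau> * dJ_eps V a \<epsilon> x v" using dv \<tau>(1) by simp
      moreover have "\<tau>^2 * M \<le> \<tau> * (\<sigma> / 4)"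
        using mult_left_mono[OF \<tau>(3), of \<tau>] \<tau>(1) by (simp add: power2_eq_square mult.assoc)
      ultimately show ?thesis using Jx by linarith
    qed
    finally show False using \<eta>(3) by (simp add: algebra_simps)
  qed
  moreover have "J_eps V a \<epsilon> x < B_eps V a \<epsilon> + \<sigma>" using Jx \<eta>_le_\<sigma> unfolding B_def by linarith
  ultimately show ?thesis using xW by blast
qed

theorem exists_PS_sequence: "\<exists>xs. PS_seq V a \<epsilon> (B_eps V a \<epsilon>) xs"
proof -
  define e where "e = (\<lambda>n::nat. inverse (real (Suc n)))"
  have "0 < e n" for n unfolding e_def by simp
  then have "\<forall>n. \<exists>x. x \<in> W_set \<and> J_eps V a \<epsilon> x < B_eps V a \<epsilon> + e n \<and> \<bar>dJ_norm V a \<epsilon> x\<bar> < e n"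
    using near_minimizer_dJ_norm_small by blast
  then obtain xs where xs: "\<And>n. xs n \<in> W_set" "\<And>n. J_eps V a \<epsilon> (xs n) < B_eps V a \<epsilon> + e n"
    "\<And>n. \<bar>dJ_norm V a \<epsilon> (xs n)\<bar> < e n" by metis
  have e: "e \<longlonglongrightarrow> 0" unfolding e_def by (rule LIMSEQ_inverse_real_of_nat)
  have "norm (J_eps V a \<epsilon> (xs n) - B_eps V a \<epsilon>) \<le> e n" for n
    using xs(2)[of n] B_eps_le_J_eps[OF xs(1)[of n]] by simp
  then have "(\<lambda>n. J_eps V a \<epsilon> (xs n) - B_eps V a \<epsilon>) \<longlonglongrightarrow> 0"
    by (intro Lim_null_comparison[OF _ e] always_eventually allI)
  then have "(\<lambda>n. J_eps V a \<epsilon> (xs n)) \<longlonglongrightarrow> B_eps V a \<epsilon>"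
    by (simp add: LIM_zero_iff)
  moreover have "(\<lambda>n. dJ_norm V a \<epsilon> (xs n)) \<longlonglongrightarrow> 0"
    using xs(3) by (intro Lim_null_comparison[OF _ e] always_eventually allI) (simp add: less_imp_le)
  ultimately show ?thesis unfolding PS_seq_def using xs(1) by blast
qed

end

theorem lemma3p3:
  fixes V a :: "real \<Rightarrow> real" and a_inf \<epsilon> :: real
  assumes V_diff: "\<forall>x. V differentiable at x"
    and V'_diff: "\<forall>x. deriv V differentiable at x"
    and V''_cont: "continuous_on UNIV (deriv (deriv V))"
    and V_nonneg: "\<forall>x. V x \<ge> 0"
    and V_zeros: "V (-1) = 0" "V 1 = 0"
    and V_pos_in: "\<forall>x. -1 < x \<and> x < 1 \<longrightarrow> V x > 0"
    and V''_pos: "deriv (deriv V) (-1) > 0" "deriv (deriv V) 1 > 0"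
    and V_out: "\<forall>x. \<bar>x\<bar> > 1 \<longrightarrow> V x > 0 \<and> deriv V x * x > 0"
    and V_coercive: "filterlim V at_top at_infinity"
    and a_bdd: "bounded (range a)"
    and a_cont: "continuous_on UNIV a"
    and a_liminf: "Liminf at_infinity (\<lambda>t. ereal (a t)) = ereal a_inf"
    and a_inf_gt: "a_inf > (INF t. a t)"
    and a_inf_0: "(INF t. a t) = a 0"
    and a0_pos: "a 0 > 0"
    and eps_pos: "\<epsilon> > 0"
  shows "\<exists>xs. PS_seq V a \<epsilon> (B_eps V a \<epsilon>) xs"
proof -
  have "a 0 \<le> a t" for t
    using cINF_lower[OF bounded_imp_bdd_below[OF a_bdd], of t] a_inf_0 by simp
  then interpret double_well_energy V a \<epsilon> "a 0"
    using V_diff V'_diff V''_cont V_nonneg V_zeros V_coercive a_bdd a_cont a0_pos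
    by unfold_locales auto
  show ?thesis by (rule exists_PS_sequence)
qed

end
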